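(* Let $m_{-1}<m_1$ and $n_1<n_{-1}$ be real. For $(a,b)\in[0,\infty)^2$ let $F_+(a,b)=\frac{a}{a+b}m_1+\frac{b}{a+b}m_{-1}-a$ and $F_-(a,b)=\frac{b}{a+b}n_{-1}+\frac{a}{a+b}n_1-b$ (with the convention $0/0=1/2$). There is a unique $(a,b)\in[0,\infty)^2$ such that $a$ is a global maximizer of $a'\mapsto F_+(a',b)$ over $[0,\infty)$ and $b$ is a global maximizer of $b'\mapsto F_-(a,b')$ over $[0,\infty)$. It is $(a,b)=\Big(\frac{M^2N}{(M+N)^2},\frac{MN^2}{(M+N)^2}\Big)$ with $M=m_1-m_{-1}$, $N=n_{-1}-n_1$; in particular $a,b>0$. *)

theory Defs
  imports Complex_Main
begin

definition wfrac :: "real \<Rightarrow> real \<Rightarrow> real" where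
  "wfrac a b = (if a + b = 0 then 1/2 else a / (a + b))"

definition Fplus :: "real \<Rightarrow> real \<Rightarrow> real \<Rightarrow> real \<Rightarrow> real" where
  "Fplus m1 mm1 a b = wfrac a b * m1 + wfrac b a * mm1 - a"

definition Fminus :: "real \<Rightarrow> real \<Rightarrow> real \<Rightarrow> real \<Rightarrow> real" where
  "Fminus n1 nm1 a b = wfrac b a * nm1 + wfrac a b * n1 - b"

end

theory Submission
  imports Defs
begin

text \<open>
  Writing \<open>M = m1 - mm1\<close>, for \<open>b > 0\<close> and \<open>t = a + b\<close> one has
  \<open>Fplus m1 mm1 a b = m1 + b - (M b / t + t)\<close>, so a best reply minimises \<open>M b / t + t\<close> over \<open>t \<ge> b\<close>.
  By AM-GM the minimum is attained exactly at \<open>t = \<surd>(M b)\<close>, which gives the interior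
  first-order condition \<open>(a + b)\<^sup>2 = M b\<close>; the second player, whose payoff is the first
  player's with roles swapped, satisfies \<open>(a + b)\<^sup>2 = N a\<close>. Replies to \<open>0\<close> never exist,
  since then the payoff has no maximum, so every equilibrium is interior and solves
  both equations, whose unique positive solution is the stated one.
\<close>

definition best_reply :: "real \<Rightarrow> real \<Rightarrow> real \<Rightarrow> real \<Rightarrow> bool" where
  "best_reply m1 mm1 b a \<longleftrightarrow> a \<ge> 0 \<and> (\<forall>a'\<ge>0. Fplus m1 mm1 a' b \<le> Fplus m1 mm1 a b)"

lemma Fminus_eq_Fplus: "Fminus n1 nm1 a b = Fplus nm1 n1 b a"
  by (simp add: Fminus_def Fplus_def)

lemma Fplus_eq_shifted:
  assumes "a + b > 0"
  shows "Fplus m1 mm1 a b = m1 + b - ((m1 - mm1) * b / (a + b) + (a + b))"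
proof -
  have "wfrac a b = a / (a + b)" "wfrac b a = b / (a + b)"
    using assms by (auto simp: wfrac_def add.commute)
  then show ?thesis
    using assms unfolding Fplus_def by (simp add: field_simps)
qed

lemma no_best_reply_to_zero:
  assumes "mm1 < m1"
  shows "\<not> best_reply m1 mm1 0 a"
proof
  assume reply: "best_reply m1 mm1 0 a"
  show False
  proof (cases "a = 0")
    case True
    have "Fplus m1 mm1 ((m1 - mm1) / 4) 0 \<le> Fplus m1 mm1 0 0"
      using reply assms True by (simp add: best_reply_def)
    then show False
      using assms by (simp add: Fplus_def wfrac_def field_simps)
  next
    case False
    with reply have "a > 0" "Fplus m1 mm1 (a / 2) 0 \<le> Fplus m1 mm1 a 0"
      by (auto simp: best_reply_def)
    then show False
      by (simp add: Fplus_def wfrac_def)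
  qed
qed

lemma square_div_add_eq:
  fixes c t :: real
  assumes "t \<noteq> 0"
  shows "c\<^sup>2 / t + t = 2 * c + (t - c)\<^sup>2 / t"
  using assms by (simp add: field_simps power2_eq_square)

lemma best_reply_if_square_eq:
  assumes "b > 0" "a \<ge> 0" "(a + b)\<^sup>2 = (m1 - mm1) * b"
  shows "best_reply m1 mm1 b a"
  unfolding best_reply_def
proof (intro conjI allI impI)
  fix x :: real
  assume "x \<ge> 0"
  let ?c = "a + b"
  have "(m1 - mm1) * b / ?c + ?c = 2 * ?c"
    using assms square_div_add_eq[of ?c ?c] by simp
  also have "\<dots> \<le> 2 * ?c + (x + b - ?c)\<^sup>2 / (x + b)"
    using \<open>x \<ge> 0\<close> \<open>b > 0\<close> by simp
  also have "\<dots> = (m1 - mm1) * b / (x + b) + (x + b)"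
    using square_div_add_eq[of "x + b" ?c] \<open>x \<ge> 0\<close> \<open>b > 0\<close> assms(3) by simp
  finally show "Fplus m1 mm1 x b \<le> Fplus m1 mm1 a b"
    using \<open>x \<ge> 0\<close> assms by (simp add: Fplus_eq_shifted)
qed (use assms in simp)

lemma square_eq_if_best_reply:
  assumes "b > 0" "a > 0" and reply: "best_reply m1 mm1 b a"
  shows "(a + b)\<^sup>2 = (m1 - mm1) * b"
proof -
  define M where "M = m1 - mm1"
  define h where "h t = M * b / t + t" for t
  have min: "h (a + b) \<le> h (x + b)" if "x \<ge> 0" for x
  proof -
    have "Fplus m1 mm1 x b \<le> Fplus m1 mm1 a b"
      using reply that by (simp add: best_reply_def)
    then show ?thesis
      using that assms by (simp add: Fplus_eq_shifted h_def M_def)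
  qed
  have "M * b / (a + b) + (a + b) \<le> M + b"
    using min[of 0] assms by (simp add: h_def)
  then have "M * b + (a + b)\<^sup>2 \<le> (M + b) * (a + b)"
    using assms by (simp add: field_simps power2_eq_square)
  then have "a * (a + b) \<le> a * M"
    by (simp add: algebra_simps power2_eq_square)
  then have "b\<^sup>2 \<le> M * b"
    using assms by (simp add: power2_eq_square)
  define c where "c = sqrt (M * b)"
  have c_sq: "c\<^sup>2 = M * b"
    using \<open>b\<^sup>2 \<le> M * b\<close> c_def by (metis real_sqrt_pow2 order_trans zero_le_power2)
  have "b \<le> c"
    using \<open>b\<^sup>2 \<le> M * b\<close> c_def by (metis real_sqrt_le_mono real_sqrt_abs abs_of_pos assms(1))
  have "2 * c + (a + b - c)\<^sup>2 / (a + b) = h (a + b)"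
    using square_div_add_eq[of "a + b" c] assms c_sq by (simp add: h_def)
  also have "\<dots> \<le> h c"
    using min[of "c - b"] \<open>b \<le> c\<close> by simp
  also have "\<dots> = 2 * c"
    using c_sq \<open>b \<le> c\<close> assms(1) by (simp add: h_def power2_eq_square flip: c_sq)
  finally have "(a + b - c)\<^sup>2 / (a + b) \<le> 0"
    by simp
  then have "a + b = c"
    using assms by (simp add: divide_le_0_iff)
  then show ?thesis
    using c_sq M_def by simp
qed

lemma equilibrium_equations_iff:
  fixes M N a b :: real
  assumes "M > 0" "N > 0" "a > 0"
  shows "(a + b)\<^sup>2 = M * b \<and> (a + b)\<^sup>2 = N * a
     \<longleftrightarrow> a = M\<^sup>2 * N / (M + N)\<^sup>2 \<and> b = M * N\<^sup>2 / (M + N)\<^sup>2"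
    (is "?eqs \<longleftrightarrow> ?sol")
proof
  assume ?eqs
  then have b: "b = N * a / M"
    using assms by (simp add: field_simps)
  with \<open>?eqs\<close> have "a * (a * (M + N)\<^sup>2) = a * (N * M\<^sup>2)"
    using assms by (simp add: field_simps power2_eq_square)
  then have "a * (M + N)\<^sup>2 = N * M\<^sup>2"
    using assms by simp
  then have a: "a = M\<^sup>2 * N / (M + N)\<^sup>2"
    using assms by (simp add: field_simps)
  moreover have "b = M * N\<^sup>2 / (M + N)\<^sup>2"
    using assms by (simp add: b a power2_eq_square)
  ultimately show ?sol ..
next
  assume ?sol
  have "M\<^sup>2 * N + M * N\<^sup>2 = (M * N) * (M + N)"
    by (simp add: power2_eq_square algebra_simps)
  with \<open>?sol\<close> have "a + b = M * N / (M + N)"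
    using assms by (simp add: add_divide_distrib [symmetric] power2_eq_square)
  then show ?eqs
    using \<open>?sol\<close> by (simp add: power_divide power_mult_distrib power2_eq_square)
qed

lemma mutual_best_replies_iff:
  assumes "mm1 < m1" "n1 < nm1"
  defines "M \<equiv> m1 - mm1" and "N \<equiv> nm1 - n1"
  shows "best_reply m1 mm1 b a \<and> best_reply nm1 n1 a b
     \<longleftrightarrow> a = M\<^sup>2 * N / (M + N)\<^sup>2 \<and> b = M * N\<^sup>2 / (M + N)\<^sup>2"
proof -
  have "M > 0" "N > 0"
    using assms by auto
  then have pos: "M\<^sup>2 * N / (M + N)\<^sup>2 > 0" "M * N\<^sup>2 / (M + N)\<^sup>2 > 0"
    by auto
  have "best_reply m1 mm1 b a \<and> best_reply nm1 n1 a b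
      \<longleftrightarrow> a > 0 \<and> b > 0 \<and> (a + b)\<^sup>2 = M * b \<and> (b + a)\<^sup>2 = N * a"
  proof
    assume replies: "best_reply m1 mm1 b a \<and> best_reply nm1 n1 a b"
    then have "b \<noteq> 0" "a \<noteq> 0"
      using no_best_reply_to_zero assms(1,2) by blast+
    with replies have "a > 0" "b > 0"
      by (auto simp: best_reply_def)
    with replies show "a > 0 \<and> b > 0 \<and> (a + b)\<^sup>2 = M * b \<and> (b + a)\<^sup>2 = N * a"
      using square_eq_if_best_reply by (auto simp: M_def N_def)
  qed (auto simp: M_def N_def intro: best_reply_if_square_eq)
  then show ?thesis
    using equilibrium_equations_iff[OF \<open>M > 0\<close> \<open>N > 0\<close>] pos
    by (auto simp: add.commute)
qed

theorem mainTheorem13: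
  fixes m1 mm1 n1 nm1 :: real
  assumes "mm1 < m1" and "n1 < nm1"
  defines "M \<equiv> m1 - mm1" and "N \<equiv> nm1 - n1"
  shows "{(a, b). a \<ge> 0 \<and> b \<ge> 0
            \<and> (\<forall>a'\<ge>0. Fplus m1 mm1 a' b \<le> Fplus m1 mm1 a b)
            \<and> (\<forall>b'\<ge>0. Fminus n1 nm1 a b' \<le> Fminus n1 nm1 a b)}
         = {(M\<^sup>2 * N / (M + N)\<^sup>2, M * N\<^sup>2 / (M + N)\<^sup>2)}
       \<and> M\<^sup>2 * N / (M + N)\<^sup>2 > 0 \<and> M * N\<^sup>2 / (M + N)\<^sup>2 > 0"
proof -
  have "M > 0" "N > 0"
    using assms by auto
  then have "M\<^sup>2 * N / (M + N)\<^sup>2 > 0" "M * N\<^sup>2 / (M + N)\<^sup>2 > 0"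
    by auto
  with mutual_best_replies_iff[OF assms(1,2)] show ?thesis
    unfolding M_def N_def by (auto simp: best_reply_def Fminus_eq_Fplus)
qed

end
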